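(* Let $G$ be a countable directed graph, let $v_{1},v_{2},v_{3},v_{4}$ be mutually distinct vertices of $G$, and let $a\in W^{*}(G)$ be a $D_{G}$-valued random variable. Then the $(v_{1},v_{2})$-off-diagonal compressed random variable ${}_{v_{1}}a_{v_{2}}=L_{v_{1}}aL_{v_{2}}$ and the $(v_{3},v_{4})$-off-diagonal compressed random variable ${}_{v_{3}}a_{v_{4}}=L_{v_{3}}aL_{v_{4}}$ are free over $D_{G}$ in $(W^{*}(G),E)$.
   Context: $G$ is a countable directed graph with vertex set $V(G)$; $\mathbb{F}^{+}(G)$ is its free semigroupoid (all vertices and admissible finite paths). On $H_{G}=l^{2}(\mathbb{F}^{+}(G))$ with orthonormal basis $\{\xi_{w}\}$, $L_{w}\xi_{h}=\xi_{wh}$ if $wh\in\mathbb{F}^{+}(G)$ and $0$ otherwise; $L_{w}^{*}$ is its adjoint; $L_v$ ($v\in V(G)$) are projections. $W^{*}(G)$ is the weak-operator closure of the $*$-algebra generated by all $L_{w},L_{w}^{*}$; $D_{G}$ is the von Neumann subalgebra generated by the $L_{v}$. Each $a\in W^{*}(G)$ has Fourier expansion $a=\sum_{w\in\mathbb{F}^{+}(G:a),u_{w}\in\{1,*\}}p_{w}L_{w}^{u_{w}}$ ($p_w\neq0$) with support $\mathbb{F}^{+}(G:a)$ and $V(G:a)=\mathbb{F}^{+}(G:a)\cap V(G)$. The conditional expectation $E:W^{*}(G)\to D_{G}$ is $E(a)=\sum_{v\in V(G:a)}p_{v}L_{v}$; "free over $D_G$" means free with amalgamation over $D_G$ with respect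 to $E$. *)

theory Defs
  imports "HOL-Analysis.Analysis" "HOL-Library.Countable_Set" "Graph_Theory.Digraph"
begin

text \<open>Elements of the free semigroupoid: vertices, and nonempty finite edge words.
  A word e1 e2 ... en is admissible if head(e_i) = tail(e_(i+1)); tail = source, head = range.\<close>

datatype ('v,'e) gpath = GV 'v | GE "'e list"

fun gsrc :: "('v,'e) pre_digraph \<Rightarrow> ('v,'e) gpath \<Rightarrow> 'v" where
  "gsrc G (GV v) = v"
| "gsrc G (GE es) = tail G (hd es)"

definition FP :: "('v,'e) pre_digraph \<Rightarrow> ('v,'e) gpath set" where
  "FP G = {GV v | v. v \<in> verts G} \<union>
          {GE es | es. es \<noteq> [] \<and> set es \<subseteq> arcs G \<and>
             (\<forall>i. Suc i < length es \<longrightarrow> head G (es ! i) = tail G (es ! Suc i))}"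

text \<open>Partial product of the free semigroupoid (None = the product is not defined, i.e. 0).\<close>
fun gmult :: "('v,'e) pre_digraph \<Rightarrow> ('v,'e) gpath \<Rightarrow> ('v,'e) gpath \<Rightarrow> ('v,'e) gpath option" where
  "gmult G (GV v) y = (if gsrc G y = v then Some y else None)"
| "gmult G (GE a) (GV u) = (if head G (last a) = u then Some (GE a) else None)"
| "gmult G (GE a) (GE b) = (if head G (last a) = tail G (hd b) then Some (GE (a @ b)) else None)"

type_synonym 'p vec = "'p \<Rightarrow> complex"
type_synonym 'p op = "'p vec \<Rightarrow> 'p vec"

definition ell2 :: "'p vec set" where
  "ell2 = {f. (\<lambda>x. (cmod (f x))\<^sup>2) summable_on UNIV}"

definition l2inner :: "'p vec \<Rightarrow> 'p vec \<Rightarrow> complex" where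
  "l2inner f g = (\<Sum>\<^sub>\<infinity>x. f x * cnj (g x))"

definition l2norm :: "'p vec \<Rightarrow> real" where
  "l2norm f = sqrt (\<Sum>\<^sub>\<infinity>x. (cmod (f x))\<^sup>2)"

definition basis :: "'p \<Rightarrow> 'p vec" where
  "basis k = (\<lambda>x. if x = k then 1 else 0)"

definition bounded_op :: "'p op \<Rightarrow> bool" where
  "bounded_op T \<longleftrightarrow>
     (\<forall>f\<in>ell2. T f \<in> ell2) \<and>
     (\<forall>f\<in>ell2. \<forall>g\<in>ell2. T (\<lambda>x. f x + g x) = (\<lambda>x. T f x + T g x)) \<and>
     (\<forall>f\<in>ell2. \<forall>c. T (\<lambda>x. c * f x) = (\<lambda>x. c * T f x)) \<and>
     (\<exists>C. \<forall>f\<in>ell2. l2norm (T f) \<le> C * l2norm f) \<and>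
     (\<forall>f. f \<notin> ell2 \<longrightarrow> T f = (\<lambda>x. 0))"

definition zero_op :: "'p op" where
  "zero_op = (\<lambda>f x. 0)"

definition add_op :: "'p op \<Rightarrow> 'p op \<Rightarrow> 'p op" where
  "add_op S T = (\<lambda>f x. S f x + T f x)"

definition smult_op :: "complex \<Rightarrow> 'p op \<Rightarrow> 'p op" where
  "smult_op c T = (\<lambda>f x. c * T f x)"

definition adj :: "'p op \<Rightarrow> 'p op" where
  "adj T = (THE S. bounded_op S \<and> (\<forall>f\<in>ell2. \<forall>g\<in>ell2. l2inner (T f) g = l2inner f (S g)))"

inductive_set star_alg :: "'p op set \<Rightarrow> 'p op set" for S where
  gen: "T \<in> S \<Longrightarrow> T \<in> star_alg S"
| add: "T1 \<in> star_alg S \<Longrightarrow> T2 \<in> star_alg S \<Longrightarrow> add_op T1 T2 \<in> star_alg S"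
| smult: "T \<in> star_alg S \<Longrightarrow> smult_op c T \<in> star_alg S"
| mult: "T1 \<in> star_alg S \<Longrightarrow> T2 \<in> star_alg S \<Longrightarrow> T1 \<circ> T2 \<in> star_alg S"
| star: "T \<in> star_alg S \<Longrightarrow> adj T \<in> star_alg S"

definition wot_closure :: "'p op set \<Rightarrow> 'p op set" where
  "wot_closure A = {T. bounded_op T \<and>
     (\<forall>F. finite F \<longrightarrow> F \<subseteq> ell2 \<times> ell2 \<longrightarrow> (\<forall>\<epsilon>>0. \<exists>S\<in>A.
        \<forall>(f,g)\<in>F. cmod (l2inner (T f) g - l2inner (S f) g) < \<epsilon>))}"

definition wstar_gen :: "'p op set \<Rightarrow> 'p op set" where
  "wstar_gen S = wot_closure (star_alg S)"

text \<open>Creation operators on H_G = l2(F+(G)) (realised inside l2 of all words, vanishing off F+(G)):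
  L_w xi_h = xi_(wh) if wh is defined and in F+(G), else 0.\<close>
definition Lop :: "('v,'e) pre_digraph \<Rightarrow> ('v,'e) gpath \<Rightarrow> ('v,'e) gpath op" where
  "Lop G w = (\<lambda>f. if f \<in> ell2 then
      (\<lambda>k. if k \<in> FP G \<and> (\<exists>h\<in>FP G. gmult G w h = Some k)
           then f (THE h. h \<in> FP G \<and> gmult G w h = Some k) else 0)
    else (\<lambda>k. 0))"

definition WG :: "('v,'e) pre_digraph \<Rightarrow> ('v,'e) gpath op set" where
  "WG G = wstar_gen {Lop G w | w. w \<in> FP G}"

definition DG :: "('v,'e) pre_digraph \<Rightarrow> ('v,'e) gpath op set" where
  "DG G = wstar_gen {Lop G (GV v) | v. v \<in> verts G}"

text \<open>Conditional expectation E(a) = sum over vertices v of p_v L_v, where the vertex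
  Fourier coefficient p_v of a is the (xi_v, xi_v)-entry of a. As an operator,
  E(a) xi_h = p_(src h) xi_h.\<close>
definition EG :: "('v,'e) pre_digraph \<Rightarrow> ('v,'e) gpath op \<Rightarrow> ('v,'e) gpath op" where
  "EG G a = (\<lambda>f. if f \<in> ell2 then
      (\<lambda>h. if h \<in> FP G then a (basis (GV (gsrc G h))) (GV (gsrc G h)) * f h else 0)
    else (\<lambda>h. 0))"

definition free_amalg :: "('p op \<Rightarrow> 'p op) \<Rightarrow> 'p op set \<Rightarrow> 'p op set \<Rightarrow> bool" where
  "free_amalg E A1 A2 \<longleftrightarrow>
     (\<forall>xs :: (bool \<times> 'p op) list.
        xs \<noteq> [] \<longrightarrow>
        (\<forall>i. Suc i < length xs \<longrightarrow> fst (xs ! i) \<noteq> fst (xs ! Suc i)) \<longrightarrow>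
        (\<forall>p\<in>set xs. snd p \<in> (if fst p then A1 else A2) \<and> E (snd p) = zero_op) \<longrightarrow>
        E (foldr (\<circ>) (map snd xs) id) = zero_op)"

definition free_over_DG :: "('v,'e) pre_digraph \<Rightarrow> ('v,'e) gpath op \<Rightarrow> ('v,'e) gpath op \<Rightarrow> bool" where
  "free_over_DG G x y \<longleftrightarrow>
     free_amalg (EG G) (wstar_gen (DG G \<union> {x})) (wstar_gen (DG G \<union> {y}))"

end

theory Submission
  imports Defs
begin

text \<open>
  Fix vertices v, w and let P be the coordinate projection of H_G onto the paths with source v
  or w. The generators of W*(D_G \<union> {L_v a L_w}) all have the block form P T P + D, where D is
  diagonal with the entry at a path depending only on its source vertex; this form is stable
  under sums, scalar multiples, products, adjoints and weak-operator limits. If moreover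
  E(T) = 0 then D = 0, so T = P T P. For the pairs {v1, v2} and {v3, v4} the two projections are
  orthogonal, hence the product of a centred element of one algebra with a centred element of
  the other is 0. Every alternating product of centred elements therefore vanishes, which is
  freeness over D_G.
\<close>

section \<open>Square-summable vectors\<close>

definition coord_proj :: "'p set \<Rightarrow> 'p vec \<Rightarrow> 'p vec" where
  "coord_proj A f = (\<lambda>x. if x \<in> A then f x else 0)"

lemma l2norm_nonneg: "0 \<le> l2norm f"
  unfolding l2norm_def by (simp add: infsum_nonneg)

lemma has_sum_l2norm:
  assumes "f \<in> ell2"
  shows "((\<lambda>x. (cmod (f x))\<^sup>2) has_sum (l2norm f)\<^sup>2) UNIV"
  using assms by (simp add: ell2_def l2norm_def infsum_nonneg)

lemma L2_set_le_l2norm: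
  assumes "f \<in> ell2"
  shows "L2_set (\<lambda>x. cmod (f x)) F \<le> l2norm f"
proof (cases "finite F")
  case True
  have "(\<Sum>x\<in>F. (cmod (f x))\<^sup>2) \<le> (\<Sum>\<^sub>\<infinity>x. (cmod (f x))\<^sup>2)"
    using assms True by (intro finite_sum_le_infsum) (auto simp: ell2_def)
  then show ?thesis
    unfolding L2_set_def l2norm_def by (rule real_sqrt_le_mono)
qed (simp add: l2norm_nonneg)

lemma ell2_l2norm_le_if_L2_set_le:
  assumes "\<And>F. finite F \<Longrightarrow> L2_set (\<lambda>x. cmod (f x)) F \<le> B"
  shows "f \<in> ell2" and "l2norm f \<le> B"
proof -
  have "0 \<le> B"
    using assms[of "{}"] by simp
  have partial_sums: "(\<Sum>x\<in>F. (cmod (f x))\<^sup>2) \<le> B\<^sup>2" if "finite F" for F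
  proof -
    have "(\<Sum>x\<in>F. (cmod (f x))\<^sup>2) = (L2_set (\<lambda>x. cmod (f x)) F)\<^sup>2"
      by (simp add: L2_set_def sum_nonneg)
    also have "\<dots> \<le> B\<^sup>2"
      using assms[OF that] by (simp add: power_mono)
    finally show ?thesis .
  qed
  have summable: "(\<lambda>x. (cmod (f x))\<^sup>2) summable_on UNIV"
    by (rule nonneg_bdd_above_summable_on) (use partial_sums in \<open>auto simp: bdd_above_def\<close>)
  then show "f \<in> ell2"
    by (simp add: ell2_def)
  have "(\<Sum>\<^sub>\<infinity>x. (cmod (f x))\<^sup>2) \<le> B\<^sup>2"
    using summable partial_sums by (rule infsum_le_finite_sums)
  then show "l2norm f \<le> B"
    unfolding l2norm_def using \<open>0 \<le> B\<close> by (rule real_le_lsqrt[rotated])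
qed

lemma
  assumes "f \<in> ell2" "g \<in> ell2"
  shows ell2_add: "(\<lambda>x. f x + g x) \<in> ell2"
    and l2norm_add_le: "l2norm (\<lambda>x. f x + g x) \<le> l2norm f + l2norm g"
proof -
  have "L2_set (\<lambda>x. cmod (f x + g x)) F \<le> l2norm f + l2norm g" for F
  proof -
    have "L2_set (\<lambda>x. cmod (f x + g x)) F \<le> L2_set (\<lambda>x. cmod (f x) + cmod (g x)) F"
      by (rule L2_set_mono) (simp_all add: norm_triangle_ineq)
    also have "\<dots> \<le> L2_set (\<lambda>x. cmod (f x)) F + L2_set (\<lambda>x. cmod (g x)) F"
      by (rule L2_set_triangle_ineq)
    also have "\<dots> \<le> l2norm f + l2norm g"
      using assms by (intro add_mono L2_set_le_l2norm)
    finally show ?thesis .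
  qed
  then show "(\<lambda>x. f x + g x) \<in> ell2" "l2norm (\<lambda>x. f x + g x) \<le> l2norm f + l2norm g"
    by (rule ell2_l2norm_le_if_L2_set_le)+
qed

lemma
  assumes "f \<in> ell2"
  shows ell2_scale: "(\<lambda>x. c * f x) \<in> ell2"
    and l2norm_scale_le: "l2norm (\<lambda>x. c * f x) \<le> cmod c * l2norm f"
proof -
  have "L2_set (\<lambda>x. cmod (c * f x)) F \<le> cmod c * l2norm f" for F
  proof -
    have "L2_set (\<lambda>x. cmod (c * f x)) F = cmod c * L2_set (\<lambda>x. cmod (f x)) F"
      by (simp add: norm_mult L2_set_right_distrib)
    also have "\<dots> \<le> cmod c * l2norm f"
      using L2_set_le_l2norm[OF assms] by (simp add: mult_left_mono)
    finally show ?thesis .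
  qed
  then show "(\<lambda>x. c * f x) \<in> ell2" "l2norm (\<lambda>x. c * f x) \<le> cmod c * l2norm f"
    by (rule ell2_l2norm_le_if_L2_set_le)+
qed

lemma
  assumes "f \<in> ell2"
  shows ell2_coord_proj: "coord_proj A f \<in> ell2"
    and l2norm_coord_proj_le: "l2norm (coord_proj A f) \<le> l2norm f"
proof -
  have "L2_set (\<lambda>x. cmod (coord_proj A f x)) F \<le> l2norm f" for F
    by (rule order_trans[OF L2_set_mono L2_set_le_l2norm[OF assms]]) (auto simp: coord_proj_def)
  then show "coord_proj A f \<in> ell2" "l2norm (coord_proj A f) \<le> l2norm f"
    by (rule ell2_l2norm_le_if_L2_set_le)+
qed

lemma
  assumes "finite F"
  shows ell2_coord_proj_finite: "coord_proj F f \<in> ell2"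
    and l2norm_coord_proj_finite: "l2norm (coord_proj F f) = L2_set (\<lambda>x. cmod (f x)) F"
proof -
  have "((\<lambda>x. (cmod (coord_proj F f x))\<^sup>2) has_sum (\<Sum>x\<in>F. (cmod (f x))\<^sup>2)) UNIV"
    by (rule has_sum_cong_neutral[THEN iffD2, OF _ _ _ has_sum_finite[OF assms]])
      (auto simp: coord_proj_def)
  then show "coord_proj F f \<in> ell2" "l2norm (coord_proj F f) = L2_set (\<lambda>x. cmod (f x)) F"
    by (auto simp: ell2_def l2norm_def L2_set_def has_sum_iff)
qed

lemma basis_apply: "basis h k = (if k = h then 1 else 0)"
  by (simp add: basis_def)

lemma ell2_zero [simp]: "(\<lambda>x. 0) \<in> ell2"
  by (simp add: ell2_def)

lemma ell2_basis [simp]: "basis k \<in> ell2"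
proof -
  have "basis k = coord_proj {k} (\<lambda>_. 1)"
    by (auto simp: basis_def coord_proj_def)
  then show ?thesis
    by (simp add: ell2_coord_proj_finite)
qed

lemma
  assumes "f \<in> ell2" "g \<in> ell2"
  shows abs_summable_l2inner: "(\<lambda>x. norm (f x * cnj (g x))) summable_on UNIV"
    and l2inner_Cauchy_Schwarz: "cmod (l2inner f g) \<le> l2norm f * l2norm g"
proof -
  have partial_sums: "(\<Sum>x\<in>F. norm (f x * cnj (g x))) \<le> l2norm f * l2norm g" for F
  proof -
    have "(\<Sum>x\<in>F. norm (f x * cnj (g x))) = (\<Sum>x\<in>F. \<bar>cmod (f x)\<bar> * \<bar>cmod (g x)\<bar>)"
      by (simp add: norm_mult)
    also have "\<dots> \<le> L2_set (\<lambda>x. cmod (f x)) F * L2_set (\<lambda>x. cmod (g x)) F"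
      by (rule L2_set_mult_ineq)
    also have "\<dots> \<le> l2norm f * l2norm g"
      using assms by (intro mult_mono L2_set_le_l2norm l2norm_nonneg L2_set_nonneg)
    finally show ?thesis .
  qed
  show abs_summable: "(\<lambda>x. norm (f x * cnj (g x))) summable_on UNIV"
    by (rule nonneg_bdd_above_summable_on) (use partial_sums in \<open>auto simp: bdd_above_def\<close>)
  have "cmod (l2inner f g) \<le> (\<Sum>\<^sub>\<infinity>x. norm (f x * cnj (g x)))"
    unfolding l2inner_def by (rule norm_infsum_bound[OF abs_summable])
  also have "\<dots> \<le> l2norm f * l2norm g"
    using abs_summable partial_sums by (rule infsum_le_finite_sums)
  finally show "cmod (l2inner f g) \<le> l2norm f * l2norm g" .
qed

lemma summable_l2inner: "f \<in> ell2 \<Longrightarrow> g \<in> ell2 \<Longrightarrow> (\<lambda>x. f x * cnj (g x)) summable_on UNIV"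
  by (rule abs_summable_summable[OF abs_summable_l2inner])

lemma l2inner_add_left:
  "f \<in> ell2 \<Longrightarrow> h \<in> ell2 \<Longrightarrow> g \<in> ell2 \<Longrightarrow> l2inner (\<lambda>x. f x + h x) g = l2inner f g + l2inner h g"
  unfolding l2inner_def by (simp add: distrib_right infsum_add summable_l2inner)

lemma l2inner_add_right:
  "f \<in> ell2 \<Longrightarrow> g \<in> ell2 \<Longrightarrow> h \<in> ell2 \<Longrightarrow> l2inner f (\<lambda>x. g x + h x) = l2inner f g + l2inner f h"
  unfolding l2inner_def by (simp add: distrib_left infsum_add summable_l2inner)

lemma l2inner_scale_left: "l2inner (\<lambda>x. c * f x) g = c * l2inner f g"
  unfolding l2inner_def by (simp add: mult.assoc infsum_cmult_right')

lemma l2inner_scale_right: "l2inner f (\<lambda>x. c * g x) = cnj c * l2inner f g"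
  unfolding l2inner_def by (simp add: mult.left_commute infsum_cmult_right')

lemma l2inner_basis_right [simp]: "l2inner f (basis k) = f k"
proof -
  have "l2inner f (basis k) = (\<Sum>\<^sub>\<infinity>x\<in>{k}. f x * cnj (basis k x))"
    unfolding l2inner_def by (rule infsum_cong_neutral) (auto simp: basis_def)
  then show ?thesis
    by (simp add: basis_def)
qed

lemma l2inner_basis_left [simp]: "l2inner (basis k) f = cnj (f k)"
proof -
  have "l2inner (basis k) f = (\<Sum>\<^sub>\<infinity>x\<in>{k}. basis k x * cnj (f x))"
    unfolding l2inner_def by (rule infsum_cong_neutral) (auto simp: basis_def)
  then show ?thesis
    by (simp add: basis_def)
qed

lemma tendsto_l2norm_coord_proj_Compl:
  assumes f: "f \<in> ell2"
  shows "((\<lambda>F. l2norm (coord_proj (- F) f)) \<longlongrightarrow> 0) (finite_subsets_at_top UNIV)"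
proof -
  have tail: "l2norm (coord_proj (- F) f) = sqrt ((l2norm f)\<^sup>2 - (\<Sum>x\<in>F. (cmod (f x))\<^sup>2))"
    if "finite F" for F
  proof -
    have "((\<lambda>x. (cmod (coord_proj (- F) f x))\<^sup>2 + (cmod (coord_proj F f x))\<^sup>2) has_sum
          (l2norm (coord_proj (- F) f))\<^sup>2 + (l2norm (coord_proj F f))\<^sup>2) UNIV"
      using f that by (intro has_sum_add has_sum_l2norm ell2_coord_proj ell2_coord_proj_finite)
    moreover have "(\<lambda>x. (cmod (coord_proj (- F) f x))\<^sup>2 + (cmod (coord_proj F f x))\<^sup>2) =
                   (\<lambda>x. (cmod (f x))\<^sup>2)"
      by (auto simp: coord_proj_def)
    moreover have "(l2norm (coord_proj F f))\<^sup>2 = (\<Sum>x\<in>F. (cmod (f x))\<^sup>2)"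
      using that by (simp add: l2norm_coord_proj_finite L2_set_def sum_nonneg)
    ultimately have "(l2norm f)\<^sup>2 = (l2norm (coord_proj (- F) f))\<^sup>2 + (\<Sum>x\<in>F. (cmod (f x))\<^sup>2)"
      using has_sum_l2norm[OF f] by (metis has_sum_unique)
    then show ?thesis
      by (simp add: l2norm_nonneg)
  qed
  have "((\<lambda>F. \<Sum>x\<in>F. (cmod (f x))\<^sup>2) \<longlongrightarrow> (l2norm f)\<^sup>2) (finite_subsets_at_top UNIV)"
    using has_sum_l2norm[OF f] by (simp add: has_sum_def)
  then have "((\<lambda>F. sqrt ((l2norm f)\<^sup>2 - (\<Sum>x\<in>F. (cmod (f x))\<^sup>2))) \<longlongrightarrow>
              sqrt ((l2norm f)\<^sup>2 - (l2norm f)\<^sup>2)) (finite_subsets_at_top UNIV)"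
    by (intro tendsto_intros)
  then show ?thesis
    by (simp add: tail Lim_transform_eventually eventually_finite_subsets_at_top_weakI)
qed

section \<open>Bounded operators and adjoints\<close>

lemma bounded_opI:
  assumes "\<And>f. f \<in> ell2 \<Longrightarrow> T f \<in> ell2"
    and "\<And>f g. f \<in> ell2 \<Longrightarrow> g \<in> ell2 \<Longrightarrow> T (\<lambda>x. f x + g x) = (\<lambda>x. T f x + T g x)"
    and "\<And>f c. f \<in> ell2 \<Longrightarrow> T (\<lambda>x. c * f x) = (\<lambda>x. c * T f x)"
    and "\<And>f. f \<in> ell2 \<Longrightarrow> l2norm (T f) \<le> C * l2norm f"
    and "\<And>f. f \<notin> ell2 \<Longrightarrow> T f = (\<lambda>x. 0)"
  shows "bounded_op T"
  unfolding bounded_op_def using assms by blast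

lemma
  assumes "bounded_op T"
  shows bounded_op_add: "f \<in> ell2 \<Longrightarrow> g \<in> ell2 \<Longrightarrow> T (\<lambda>x. f x + g x) = (\<lambda>x. T f x + T g x)"
    and bounded_op_scale: "f \<in> ell2 \<Longrightarrow> T (\<lambda>x. c * f x) = (\<lambda>x. c * T f x)"
    and bounded_op_outside: "f \<notin> ell2 \<Longrightarrow> T f = (\<lambda>x. 0)"
    and bounded_op_ell2: "T f \<in> ell2"
  using assms unfolding bounded_op_def by (cases "f \<in> ell2"; simp)+

lemma bounded_op_zero: "bounded_op T \<Longrightarrow> T (\<lambda>x. 0) = (\<lambda>x. 0)"
  using bounded_op_scale[of T "\<lambda>x. 0" 0] by simp

lemma bounded_opE:
  assumes "bounded_op T"
  obtains C where "0 \<le> C" "\<And>f. f \<in> ell2 \<Longrightarrow> l2norm (T f) \<le> C * l2norm f"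
proof -
  obtain C where C: "\<And>f. f \<in> ell2 \<Longrightarrow> l2norm (T f) \<le> C * l2norm f"
    using assms unfolding bounded_op_def by blast
  have "l2norm (T f) \<le> max C 0 * l2norm f" if "f \<in> ell2" for f
  proof -
    have "C * l2norm f \<le> max C 0 * l2norm f"
      by (intro mult_right_mono l2norm_nonneg) simp
    then show ?thesis
      using C[OF that] by linarith
  qed
  then show ?thesis
    using that[of "max C 0"] by simp
qed

lemma l2inner_bounded_op_coord_proj_finite:
  assumes T: "bounded_op T" and "finite F" and g: "g \<in> ell2"
  shows "l2inner (T (coord_proj F f)) g = (\<Sum>h\<in>F. f h * l2inner (T (basis h)) g)"
  using \<open>finite F\<close>
proof (induction F rule: finite_induct)
  case empty
  have "coord_proj {} f = (\<lambda>x. 0)"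
    by (simp add: coord_proj_def)
  then show ?case
    by (simp add: bounded_op_zero[OF T] l2inner_def)
next
  case (insert a F)
  have "coord_proj (insert a F) f = (\<lambda>x. f a * basis a x + coord_proj F f x)"
    using insert.hyps(2) by (auto simp: coord_proj_def basis_def)
  then have "T (coord_proj (insert a F) f) = (\<lambda>x. f a * T (basis a) x + T (coord_proj F f) x)"
    using insert.hyps(1) by (simp add: bounded_op_add[OF T] bounded_op_scale[OF T]
        ell2_scale ell2_coord_proj_finite)
  then show ?case
    using insert g by (simp add: l2inner_add_left l2inner_scale_left bounded_op_ell2[OF T] ell2_scale)
qed

lemma tendsto_l2inner_bounded_op_coord_proj_Compl:
  assumes T: "bounded_op T" and f: "f \<in> ell2" and g: "g \<in> ell2"
  shows "((\<lambda>F. l2inner (T (coord_proj (- F) f)) g) \<longlongrightarrow> 0) (finite_subsets_at_top UNIV)"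
proof -
  obtain C where C: "0 \<le> C" "\<And>u. u \<in> ell2 \<Longrightarrow> l2norm (T u) \<le> C * l2norm u"
    using bounded_opE[OF T] by blast
  have bound: "cmod (l2inner (T (coord_proj (- F) f)) g) \<le> C * l2norm g * l2norm (coord_proj (- F) f)" for F
  proof -
    have "cmod (l2inner (T (coord_proj (- F) f)) g) \<le> l2norm (T (coord_proj (- F) f)) * l2norm g"
      by (rule l2inner_Cauchy_Schwarz[OF bounded_op_ell2[OF T] g])
    also have "\<dots> \<le> C * l2norm (coord_proj (- F) f) * l2norm g"
      by (intro mult_right_mono C(2) ell2_coord_proj f l2norm_nonneg)
    finally show ?thesis
      by (simp add: mult_ac)
  qed
  show ?thesis
  proof (rule Lim_null_comparison)
    show "\<forall>\<^sub>F F in finite_subsets_at_top UNIV.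
        norm (l2inner (T (coord_proj (- F) f)) g) \<le> C * l2norm g * l2norm (coord_proj (- F) f)"
      using bound by simp
    show "((\<lambda>F. C * l2norm g * l2norm (coord_proj (- F) f)) \<longlongrightarrow> 0) (finite_subsets_at_top UNIV)"
      by (rule tendsto_mult_right_zero[OF tendsto_l2norm_coord_proj_Compl[OF f]])
  qed
qed

lemma has_sum_l2inner_bounded_op:
  assumes T: "bounded_op T" and f: "f \<in> ell2" and g: "g \<in> ell2"
  shows "((\<lambda>h. f h * l2inner (T (basis h)) g) has_sum l2inner (T f) g) UNIV"
proof -
  have "l2inner (T f) g - l2inner (T (coord_proj (- F) f)) g =
        (\<Sum>h\<in>F. f h * l2inner (T (basis h)) g)" if "finite F" for F
  proof -
    have "(\<lambda>x. coord_proj (- F) f x + coord_proj F f x) = f"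
      by (auto simp: coord_proj_def)
    then have "T f = (\<lambda>x. T (coord_proj (- F) f) x + T (coord_proj F f) x)"
      using bounded_op_add[OF T ell2_coord_proj[OF f] ell2_coord_proj[OF f], of "- F" F] by simp
    then show ?thesis
      using l2inner_bounded_op_coord_proj_finite[OF T that g]
      by (simp add: l2inner_add_left bounded_op_ell2[OF T] g)
  qed
  then have "\<forall>\<^sub>F F in finite_subsets_at_top UNIV.
      l2inner (T f) g - l2inner (T (coord_proj (- F) f)) g = (\<Sum>h\<in>F. f h * l2inner (T (basis h)) g)"
    by (simp add: eventually_finite_subsets_at_top_weakI)
  moreover have "((\<lambda>F. l2inner (T f) g - l2inner (T (coord_proj (- F) f)) g) \<longlongrightarrow> l2inner (T f) g)
      (finite_subsets_at_top UNIV)"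
    using tendsto_diff[OF tendsto_const tendsto_l2inner_bounded_op_coord_proj_Compl[OF T f g]] by simp
  ultimately show ?thesis
    unfolding has_sum_def by (rule Lim_transform_eventually[rotated])
qed

lemma has_sum_bounded_op_apply:
  "bounded_op T \<Longrightarrow> f \<in> ell2 \<Longrightarrow> ((\<lambda>h. f h * T (basis h) k) has_sum T f k) UNIV"
  using has_sum_l2inner_bounded_op[of T f "basis k"] by simp

lemma bounded_op_apply_eq_0:
  assumes "bounded_op T" "f \<in> ell2" "\<And>h. f h \<noteq> 0 \<Longrightarrow> T (basis h) k = 0"
  shows "T f k = 0"
proof -
  have "((\<lambda>h. f h * T (basis h) k) has_sum 0) UNIV"
    using assms(3) by (intro has_sum_0) force
  then show ?thesis
    by (rule has_sum_unique[OF has_sum_bounded_op_apply[OF assms(1,2)]])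
qed

definition adjoint_op :: "'p op \<Rightarrow> 'p op" where
  "adjoint_op T g = (if g \<in> ell2 then (\<lambda>h. cnj (l2inner (T (basis h)) g)) else (\<lambda>h. 0))"

lemma L2_set_l2inner_bounded_op_basis_le:
  assumes T: "bounded_op T"
    and C: "0 \<le> C" "\<And>f. f \<in> ell2 \<Longrightarrow> l2norm (T f) \<le> C * l2norm f"
    and g: "g \<in> ell2" and F: "finite F"
  shows "L2_set (\<lambda>h. cmod (l2inner (T (basis h)) g)) F \<le> C * l2norm g"
proof -
  define c where "c h = l2inner (T (basis h)) g" for h
  define s where "s = L2_set (\<lambda>h. cmod (c h)) F"
  define u where "u = coord_proj F (\<lambda>h. cnj (c h))"
  have u: "u \<in> ell2" "l2norm u = s"
    using F by (simp_all add: u_def s_def ell2_coord_proj_finite l2norm_coord_proj_finite)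
  have "l2inner (T u) g = (\<Sum>h\<in>F. cnj (c h) * c h)"
    unfolding u_def c_def using T F g by (rule l2inner_bounded_op_coord_proj_finite)
  also have "\<dots> = (\<Sum>h\<in>F. of_real ((cmod (c h))\<^sup>2))"
    by (intro sum.cong refl) (metis complex_norm_square mult.commute)
  also have "\<dots> = of_real (s\<^sup>2)"
    by (simp add: s_def L2_set_def sum_nonneg)
  finally have "s\<^sup>2 = cmod (l2inner (T u) g)"
    by (simp add: norm_power)
  also have "\<dots> \<le> l2norm (T u) * l2norm g"
    by (rule l2inner_Cauchy_Schwarz[OF bounded_op_ell2[OF T] g])
  also have "\<dots> \<le> C * s * l2norm g"
    using C(2)[OF u(1)] by (simp add: u(2) mult_right_mono l2norm_nonneg)
  finally have "s * s \<le> (C * l2norm g) * s"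
    by (simp add: power2_eq_square mult_ac)
  then have "s \<le> C * l2norm g" if "0 < s"
    using that by (rule mult_right_le_imp_le)
  moreover have "0 \<le> C * l2norm g"
    using C(1) by (simp add: l2norm_nonneg)
  ultimately show ?thesis
    unfolding s_def c_def by force
qed

lemma
  assumes T: "bounded_op T"
    and C: "0 \<le> C" "\<And>f. f \<in> ell2 \<Longrightarrow> l2norm (T f) \<le> C * l2norm f"
    and g: "g \<in> ell2"
  shows ell2_adjoint_op: "adjoint_op T g \<in> ell2"
    and l2norm_adjoint_op_le: "l2norm (adjoint_op T g) \<le> C * l2norm g"
  using L2_set_l2inner_bounded_op_basis_le[OF T C g]
    ell2_l2norm_le_if_L2_set_le[of "adjoint_op T g" "C * l2norm g"] g
  by (simp_all add: adjoint_op_def)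

lemma l2inner_adjoint_op:
  assumes "bounded_op T" "f \<in> ell2" "g \<in> ell2"
  shows "l2inner (T f) g = l2inner f (adjoint_op T g)"
  using infsumI[OF has_sum_l2inner_bounded_op[OF assms]] assms(3)
  by (simp add: l2inner_def adjoint_op_def)

lemma bounded_op_adjoint_op:
  assumes T: "bounded_op T"
  shows "bounded_op (adjoint_op T)"
proof -
  obtain C where C: "0 \<le> C" "\<And>f. f \<in> ell2 \<Longrightarrow> l2norm (T f) \<le> C * l2norm f"
    using bounded_opE[OF T] by blast
  show ?thesis
  proof (rule bounded_opI)
    show "adjoint_op T f \<in> ell2" "l2norm (adjoint_op T f) \<le> C * l2norm f" if "f \<in> ell2" for f
      using ell2_adjoint_op[OF T C that] l2norm_adjoint_op_le[OF T C that] by simp_all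
    show "adjoint_op T (\<lambda>x. f x + g x) = (\<lambda>x. adjoint_op T f x + adjoint_op T g x)"
      if "f \<in> ell2" "g \<in> ell2" for f g
      using that by (simp add: adjoint_op_def ell2_add l2inner_add_right bounded_op_ell2[OF T])
    show "adjoint_op T (\<lambda>x. c * f x) = (\<lambda>x. c * adjoint_op T f x)" if "f \<in> ell2" for f c
      using that by (simp add: adjoint_op_def ell2_scale l2inner_scale_right)
    show "adjoint_op T f = (\<lambda>x. 0)" if "f \<notin> ell2" for f
      using that by (simp add: adjoint_op_def)
  qed
qed

lemma adj_eq_adjoint_op:
  assumes T: "bounded_op T"
  shows "adj T = adjoint_op T"
  unfolding adj_def
proof (rule the_equality)
  show "bounded_op (adjoint_op T) \<and>
        (\<forall>f\<in>ell2. \<forall>g\<in>ell2. l2inner (T f) g = l2inner f (adjoint_op T g))"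
    using bounded_op_adjoint_op[OF T] l2inner_adjoint_op[OF T] by blast
next
  fix S
  assume S: "bounded_op S \<and> (\<forall>f\<in>ell2. \<forall>g\<in>ell2. l2inner (T f) g = l2inner f (S g))"
  have "S g = adjoint_op T g" for g
  proof (cases "g \<in> ell2")
    case True
    have "S g k = cnj (l2inner (basis k) (S g))" for k
      by simp
    with S True show ?thesis
      by (auto simp: adjoint_op_def)
  next
    case False
    with S show ?thesis
      by (simp add: adjoint_op_def bounded_op_outside)
  qed
  then show "S = adjoint_op T" ..
qed

lemma bounded_op_adj: "bounded_op T \<Longrightarrow> bounded_op (adj T)"
  by (simp add: adj_eq_adjoint_op bounded_op_adjoint_op)

lemma adj_basis_apply: "bounded_op T \<Longrightarrow> adj T (basis h) k = cnj (T (basis k) h)"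
  by (simp add: adj_eq_adjoint_op adjoint_op_def)

lemma add_op_apply: "add_op S T f x = S f x + T f x"
  by (simp add: add_op_def)

lemma smult_op_apply: "smult_op c T f x = c * T f x"
  by (simp add: smult_op_def)

lemma bounded_op_add_op:
  assumes S: "bounded_op S" and T: "bounded_op T"
  shows "bounded_op (add_op S T)"
proof -
  obtain C1 where C1: "0 \<le> C1" "\<And>f. f \<in> ell2 \<Longrightarrow> l2norm (S f) \<le> C1 * l2norm f"
    using bounded_opE[OF S] by blast
  obtain C2 where C2: "0 \<le> C2" "\<And>f. f \<in> ell2 \<Longrightarrow> l2norm (T f) \<le> C2 * l2norm f"
    using bounded_opE[OF T] by blast
  show ?thesis
  proof (rule bounded_opI)
    show "l2norm (add_op S T f) \<le> (C1 + C2) * l2norm f" if "f \<in> ell2" for f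
      using order_trans[OF l2norm_add_le[OF bounded_op_ell2[OF S] bounded_op_ell2[OF T]]
          add_mono[OF C1(2)[OF that] C2(2)[OF that]]]
      by (simp add: add_op_def distrib_right)
  qed (auto simp: add_op_def S T bounded_op_ell2 ell2_add bounded_op_add bounded_op_scale
      bounded_op_outside distrib_left)
qed

lemma bounded_op_smult_op:
  assumes T: "bounded_op T"
  shows "bounded_op (smult_op c T)"
proof -
  obtain C where C: "0 \<le> C" "\<And>f. f \<in> ell2 \<Longrightarrow> l2norm (T f) \<le> C * l2norm f"
    using bounded_opE[OF T] by blast
  show ?thesis
  proof (rule bounded_opI)
    show "l2norm (smult_op c T f) \<le> (cmod c * C) * l2norm f" if "f \<in> ell2" for f
      using order_trans[OF l2norm_scale_le[OF bounded_op_ell2[OF T]] mult_left_mono[OF C(2)[OF that] norm_ge_zero]]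
      by (simp add: smult_op_def mult.assoc)
  qed (auto simp: smult_op_def T bounded_op_ell2 ell2_scale bounded_op_add bounded_op_scale
      bounded_op_outside distrib_left mult.left_commute)
qed

lemma bounded_op_comp:
  assumes S: "bounded_op S" and T: "bounded_op T"
  shows "bounded_op (S \<circ> T)"
proof -
  obtain C1 where C1: "0 \<le> C1" "\<And>f. f \<in> ell2 \<Longrightarrow> l2norm (S f) \<le> C1 * l2norm f"
    using bounded_opE[OF S] by blast
  obtain C2 where C2: "0 \<le> C2" "\<And>f. f \<in> ell2 \<Longrightarrow> l2norm (T f) \<le> C2 * l2norm f"
    using bounded_opE[OF T] by blast
  show ?thesis
  proof (rule bounded_opI)
    show "l2norm ((S \<circ> T) f) \<le> (C1 * C2) * l2norm f" if "f \<in> ell2" for f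
      using order_trans[OF C1(2)[OF bounded_op_ell2[OF T]] mult_left_mono[OF C2(2)[OF that] C1(1)]]
      by (simp add: mult.assoc)
  qed (auto simp: S T bounded_op_ell2 bounded_op_add bounded_op_scale bounded_op_outside
      bounded_op_zero)
qed

section \<open>Operators diagonal outside a set of paths\<close>

lemma GV_in_FP_iff [simp]: "GV v \<in> FP G \<longleftrightarrow> v \<in> verts G"
  by (auto simp: FP_def)

lemma gsrc_in_verts:
  assumes "wf_digraph G" "h \<in> FP G"
  shows "gsrc G h \<in> verts G"
proof (cases h)
  case (GE es)
  with assms(2) have "hd es \<in> arcs G"
    by (auto simp: FP_def)
  with GE show ?thesis
    by (simp add: wf_digraph.tail_in_verts[OF assms(1)])
qed (use assms in \<open>auto simp: FP_def\<close>)

definition paths_from :: "('v,'e) pre_digraph \<Rightarrow> 'v set \<Rightarrow> ('v,'e) gpath set" where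
  "paths_from G V = {h \<in> FP G. gsrc G h \<in> V}"

definition vertex_coeff :: "('v,'e) pre_digraph \<Rightarrow> ('v,'e) gpath op \<Rightarrow> ('v,'e) gpath \<Rightarrow> complex" where
  "vertex_coeff G T h = (if h \<in> FP G then T (basis (GV (gsrc G h))) (GV (gsrc G h)) else 0)"

definition diag_outside :: "('v,'e) pre_digraph \<Rightarrow> 'v set \<Rightarrow> ('v,'e) gpath op \<Rightarrow> bool" where
  "diag_outside G V T \<longleftrightarrow> bounded_op T \<and>
     (\<forall>h k. h \<noteq> k \<and> \<not> (h \<in> paths_from G V \<and> k \<in> paths_from G V) \<longrightarrow> T (basis h) k = 0) \<and>
     (\<forall>h. h \<notin> paths_from G V \<longrightarrow> T (basis h) h = vertex_coeff G T h)"

lemma diag_outsideI: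
  assumes "bounded_op T"
    and "\<And>h k. h \<noteq> k \<Longrightarrow> \<not> (h \<in> paths_from G V \<and> k \<in> paths_from G V) \<Longrightarrow> T (basis h) k = 0"
    and "\<And>h. h \<notin> paths_from G V \<Longrightarrow> T (basis h) h = vertex_coeff G T h"
  shows "diag_outside G V T"
  unfolding diag_outside_def using assms by blast

lemma
  assumes "diag_outside G V T"
  shows diag_outside_bounded: "bounded_op T"
    and diag_outside_off_diag:
      "h \<noteq> k \<Longrightarrow> \<not> (h \<in> paths_from G V \<and> k \<in> paths_from G V) \<Longrightarrow> T (basis h) k = 0"
    and diag_outside_diag: "h \<notin> paths_from G V \<Longrightarrow> T (basis h) h = vertex_coeff G T h"
  using assms unfolding diag_outside_def by blast+

lemma vertex_coeff_GV_gsrc: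
  "wf_digraph G \<Longrightarrow> h \<in> FP G \<Longrightarrow> vertex_coeff G T (GV (gsrc G h)) = vertex_coeff G T h"
  by (simp add: vertex_coeff_def gsrc_in_verts)

lemma diag_outside_apply_basis:
  assumes "diag_outside G V T" "h \<notin> paths_from G V"
  shows "T (basis h) = (\<lambda>k. T (basis h) h * basis h k)"
proof
  fix k
  show "T (basis h) k = T (basis h) h * basis h k"
    using diag_outside_off_diag[OF assms(1), of h k] assms(2) by (cases "k = h") (auto simp: basis_apply)
qed

lemma diag_outside_comp_basis:
  assumes T: "diag_outside G V T" and U: "diag_outside G V U" and h: "h \<notin> paths_from G V"
  shows "(T \<circ> U) (basis h) = (\<lambda>k. vertex_coeff G U h * T (basis h) k)"
proof -
  have "(T \<circ> U) (basis h) = T (\<lambda>k. U (basis h) h * basis h k)"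
    using diag_outside_apply_basis[OF U h] by (metis comp_apply)
  also have "\<dots> = (\<lambda>k. U (basis h) h * T (basis h) k)"
    by (rule bounded_op_scale[OF diag_outside_bounded[OF T] ell2_basis])
  finally show ?thesis
    by (simp add: diag_outside_diag[OF U h])
qed

lemma vertex_coeff_comp:
  assumes G: "wf_digraph G" and T: "diag_outside G V T" and U: "diag_outside G V U"
    and h: "h \<notin> paths_from G V"
  shows "vertex_coeff G (T \<circ> U) h = vertex_coeff G U h * vertex_coeff G T h"
proof (cases "h \<in> FP G")
  case True
  let ?v = "GV (gsrc G h)"
  have v: "?v \<notin> paths_from G V"
    using h True by (simp add: paths_from_def)
  have "vertex_coeff G (T \<circ> U) h = (T \<circ> U) (basis ?v) ?v"
    using True by (simp add: vertex_coeff_def)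
  also have "\<dots> = vertex_coeff G U ?v * T (basis ?v) ?v"
    by (simp only: diag_outside_comp_basis[OF T U v])
  also have "T (basis ?v) ?v = vertex_coeff G T ?v"
    by (rule diag_outside_diag[OF T v])
  finally show ?thesis
    using G True by (simp add: vertex_coeff_GV_gsrc comp_def)
qed (simp add: vertex_coeff_def)

lemma diag_outside_comp:
  assumes G: "wf_digraph G" and T: "diag_outside G V T" and U: "diag_outside G V U"
  shows "diag_outside G V (T \<circ> U)"
proof (rule diag_outsideI)
  let ?P = "paths_from G V"
  show "bounded_op (T \<circ> U)"
    using diag_outside_bounded[OF T] diag_outside_bounded[OF U] by (rule bounded_op_comp)
  fix h k
  assume "h \<noteq> k" "\<not> (h \<in> ?P \<and> k \<in> ?P)"
  then consider "h \<notin> ?P" | "h \<in> ?P" "k \<notin> ?P"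
    by blast
  then show "(T \<circ> U) (basis h) k = 0"
  proof cases
    case 1
    then show ?thesis
      using diag_outside_comp_basis[OF T U] diag_outside_off_diag[OF T \<open>h \<noteq> k\<close>] by simp
  next
    case 2
    have "T (basis j) k = 0" if "U (basis h) j \<noteq> 0" for j
    proof -
      have "j \<in> ?P"
        using diag_outside_off_diag[OF U, of h j] 2 that by blast
      then show ?thesis
        using diag_outside_off_diag[OF T, of j k] 2 by blast
    qed
    then show ?thesis
      using bounded_op_apply_eq_0[OF diag_outside_bounded[OF T]
          bounded_op_ell2[OF diag_outside_bounded[OF U]]] by simp
  qed
next
  fix h
  assume "h \<notin> paths_from G V"
  then show "(T \<circ> U) (basis h) h = vertex_coeff G (T \<circ> U) h"
    using diag_outside_comp_basis[OF T U] diag_outside_diag[OF T] vertex_coeff_comp[OF G T U] by simp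
qed

lemma vertex_coeff_add_op: "vertex_coeff G (add_op T U) h = vertex_coeff G T h + vertex_coeff G U h"
  by (simp add: vertex_coeff_def add_op_def)

lemma vertex_coeff_smult_op: "vertex_coeff G (smult_op c T) h = c * vertex_coeff G T h"
  by (simp add: vertex_coeff_def smult_op_def)

lemma vertex_coeff_adj: "bounded_op T \<Longrightarrow> vertex_coeff G (adj T) h = cnj (vertex_coeff G T h)"
  by (simp add: vertex_coeff_def adj_basis_apply)

lemma diag_outside_add_op:
  assumes T: "diag_outside G V T" and U: "diag_outside G V U"
  shows "diag_outside G V (add_op T U)"
proof (rule diag_outsideI)
  show "bounded_op (add_op T U)"
    using diag_outside_bounded[OF T] diag_outside_bounded[OF U] by (rule bounded_op_add_op)
qed (simp_all add: add_op_apply vertex_coeff_add_op diag_outside_off_diag[OF T]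
    diag_outside_off_diag[OF U] diag_outside_diag[OF T] diag_outside_diag[OF U])

lemma diag_outside_smult_op:
  assumes T: "diag_outside G V T"
  shows "diag_outside G V (smult_op c T)"
proof (rule diag_outsideI)
  show "bounded_op (smult_op c T)"
    using diag_outside_bounded[OF T] by (rule bounded_op_smult_op)
qed (simp_all add: smult_op_apply vertex_coeff_smult_op diag_outside_off_diag[OF T]
    diag_outside_diag[OF T])

lemma diag_outside_adj:
  assumes T: "diag_outside G V T"
  shows "diag_outside G V (adj T)"
proof -
  have bT: "bounded_op T"
    by (rule diag_outside_bounded[OF T])
  show ?thesis
  proof (rule diag_outsideI)
    show "bounded_op (adj T)"
      by (rule bounded_op_adj[OF bT])
  qed (auto simp: adj_basis_apply[OF bT] vertex_coeff_adj[OF bT] diag_outside_off_diag[OF T]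
      diag_outside_diag[OF T])
qed

lemma diag_outside_star_alg:
  assumes "wf_digraph G" "\<And>S. S \<in> Gs \<Longrightarrow> diag_outside G V S" "T \<in> star_alg Gs"
  shows "diag_outside G V T"
  using assms(3)
proof induction
  case (mult T1 T2)
  show ?case
    using diag_outside_comp[OF assms(1) mult.IH] .
qed (simp_all add: assms(2) diag_outside_add_op diag_outside_smult_op diag_outside_adj)

lemma wot_closure_basis_apply_eq:
  assumes T: "T \<in> wot_closure A"
    and rel: "\<And>S. S \<in> A \<Longrightarrow> S (basis h) k = c * S (basis h') k'"
  shows "T (basis h) k = c * T (basis h') k'"
proof -
  have "cmod (T (basis h) k - c * T (basis h') k') \<le> 0 + e" if "0 < e" for e
  proof -
    let ?F = "{(basis h, basis k), (basis h', basis k')}"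
    define \<delta> where "\<delta> = e / (1 + cmod c)"
    have "0 < 1 + cmod c"
      by (simp add: add_pos_nonneg)
    then have "0 < \<delta>" and \<delta>: "(1 + cmod c) * \<delta> = e"
      using that by (simp_all add: \<delta>_def)
    have "finite ?F" "?F \<subseteq> ell2 \<times> ell2"
      by auto
    with \<open>0 < \<delta>\<close> have "\<exists>S\<in>A. \<forall>(f, g)\<in>?F. cmod (l2inner (T f) g - l2inner (S f) g) < \<delta>"
      using T unfolding wot_closure_def by blast
    then obtain S where "S \<in> A"
      and close: "cmod (T (basis h) k - S (basis h) k) < \<delta>"
        "cmod (T (basis h') k' - S (basis h') k') < \<delta>"
      by auto
    have "T (basis h) k - c * T (basis h') k' =
          (T (basis h) k - S (basis h) k) - c * (T (basis h') k' - S (basis h') k')"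
      using rel[OF \<open>S \<in> A\<close>] by (simp add: algebra_simps)
    then have "cmod (T (basis h) k - c * T (basis h') k') \<le>
               cmod (T (basis h) k - S (basis h) k) + cmod c * cmod (T (basis h') k' - S (basis h') k')"
      by (metis norm_mult norm_triangle_ineq4)
    also have "\<dots> \<le> \<delta> + cmod c * \<delta>"
      using close mult_left_mono[OF less_imp_le[OF close(2)] norm_ge_zero, of c] by linarith
    finally show ?thesis
      using \<delta> by (simp add: distrib_right)
  qed
  then show ?thesis
    using field_le_epsilon[of "cmod (T (basis h) k - c * T (basis h') k')" 0] by simp
qed

lemma diag_outside_wot_closure:
  assumes "\<And>S. S \<in> A \<Longrightarrow> diag_outside G V S" "T \<in> wot_closure A"
  shows "diag_outside G V T"
proof (rule diag_outsideI)
  show "bounded_op T"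
    using assms(2) by (simp add: wot_closure_def)
  show "T (basis h) k = 0" if "h \<noteq> k" "\<not> (h \<in> paths_from G V \<and> k \<in> paths_from G V)" for h k
    using wot_closure_basis_apply_eq[OF assms(2), of h k 0 h k]
      diag_outside_off_diag[OF assms(1) that] by simp
  show "T (basis h) h = vertex_coeff G T h" if "h \<notin> paths_from G V" for h
  proof -
    have "S (basis h) h = (if h \<in> FP G then 1 else 0) * S (basis (GV (gsrc G h))) (GV (gsrc G h))"
      if "S \<in> A" for S
      using diag_outside_diag[OF assms(1)[OF that] \<open>h \<notin> paths_from G V\<close>]
      by (simp add: vertex_coeff_def)
    then have "T (basis h) h = (if h \<in> FP G then 1 else 0) * T (basis (GV (gsrc G h))) (GV (gsrc G h))"
      by (rule wot_closure_basis_apply_eq[OF assms(2)])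
    then show ?thesis
      by (simp add: vertex_coeff_def)
  qed
qed

lemma diag_outside_wstar_gen:
  "wf_digraph G \<Longrightarrow> (\<And>S. S \<in> Gs \<Longrightarrow> diag_outside G V S) \<Longrightarrow> T \<in> wstar_gen Gs \<Longrightarrow>
   diag_outside G V T"
  unfolding wstar_gen_def by (metis diag_outside_star_alg diag_outside_wot_closure)

section \<open>Compressions and freeness\<close>

lemma Lop_vertex:
  "Lop G (GV v) f = (if f \<in> ell2 then coord_proj (paths_from G {v}) f else (\<lambda>k. 0))"
proof (cases "f \<in> ell2")
  case f: True
  have "Lop G (GV v) f k = coord_proj (paths_from G {v}) f k" for k
  proof (cases "k \<in> paths_from G {v}")
    case True
    then have "(THE h. h \<in> FP G \<and> gmult G (GV v) h = Some k) = k"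
      by (intro the_equality) (auto simp: paths_from_def split: if_splits)
    with True f show ?thesis
      by (auto simp: Lop_def coord_proj_def paths_from_def)
  next
    case False
    with f show ?thesis
      by (auto simp: Lop_def coord_proj_def paths_from_def split: if_splits)
  qed
  with f show ?thesis
    by auto
qed (simp add: Lop_def)

lemma bounded_op_Lop_vertex: "bounded_op (Lop G (GV v))"
proof (rule bounded_opI)
  show "l2norm (Lop G (GV v) f) \<le> 1 * l2norm f" if "f \<in> ell2" for f
    using that by (simp add: Lop_vertex l2norm_coord_proj_le)
  show "Lop G (GV v) f \<in> ell2" if "f \<in> ell2" for f
    using that by (simp add: Lop_vertex ell2_coord_proj)
qed (auto simp: Lop_vertex ell2_add ell2_scale coord_proj_def)

lemma Lop_vertex_basis_apply:
  "Lop G (GV v) (basis h) k = (if k \<in> paths_from G {v} then basis h k else 0)"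
  by (simp add: Lop_vertex coord_proj_def)

lemma diag_outside_Lop_vertex: "wf_digraph G \<Longrightarrow> diag_outside G V (Lop G (GV v))"
  by (rule diag_outsideI[OF bounded_op_Lop_vertex])
    (auto simp: Lop_vertex_basis_apply vertex_coeff_def basis_apply paths_from_def gsrc_in_verts)

lemma diag_outside_DG: "wf_digraph G \<Longrightarrow> T \<in> DG G \<Longrightarrow> diag_outside G V T"
  unfolding DG_def by (rule diag_outside_wstar_gen) (auto intro: diag_outside_Lop_vertex)

lemma compression_basis_apply_nonzero:
  assumes "bounded_op a" "(Lop G (GV v) \<circ> a \<circ> Lop G (GV w)) (basis h) k \<noteq> 0"
  shows "h \<in> paths_from G {w}" and "k \<in> paths_from G {v}"
proof -
  show "h \<in> paths_from G {w}"
  proof (rule ccontr)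
    assume "h \<notin> paths_from G {w}"
    then have "Lop G (GV w) (basis h) = (\<lambda>x. 0)"
      by (auto simp: Lop_vertex_basis_apply basis_apply)
    then show False
      using assms by (simp add: bounded_op_zero bounded_op_Lop_vertex)
  qed
  show "k \<in> paths_from G {v}"
    using assms(2) by (auto simp: Lop_vertex coord_proj_def split: if_splits)
qed

lemma diag_outside_compression:
  assumes a: "bounded_op a"
  shows "diag_outside G {v, w} (Lop G (GV v) \<circ> a \<circ> Lop G (GV w))" (is "diag_outside G _ ?X")
proof (rule diag_outsideI)
  show "bounded_op ?X"
    by (intro bounded_op_comp bounded_op_Lop_vertex a)
  have vanish: "?X (basis h) k = 0" if "h \<notin> paths_from G {v, w} \<or> k \<notin> paths_from G {v, w}" for h k
    using compression_basis_apply_nonzero[OF a, of G v w h k] that by (auto simp: paths_from_def)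
  show "?X (basis h) k = 0" if "\<not> (h \<in> paths_from G {v, w} \<and> k \<in> paths_from G {v, w})" for h k
    using vanish that by blast
  show "?X (basis h) h = vertex_coeff G ?X h" if "h \<notin> paths_from G {v, w}" for h
    using that vanish[of h h] vanish[of "GV (gsrc G h)" "GV (gsrc G h)"]
    by (auto simp: vertex_coeff_def paths_from_def)
qed

lemma diag_outside_wstar_gen_compression:
  assumes "wf_digraph G" "bounded_op a"
    and "T \<in> wstar_gen (DG G \<union> {Lop G (GV v) \<circ> a \<circ> Lop G (GV w)})"
  shows "diag_outside G {v, w} T"
proof (rule diag_outside_wstar_gen[OF assms(1) _ assms(3)])
  fix S
  assume "S \<in> DG G \<union> {Lop G (GV v) \<circ> a \<circ> Lop G (GV w)}"
  then show "diag_outside G {v, w} S"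
    using diag_outside_DG[OF assms(1)] diag_outside_compression[OF assms(2)] by blast
qed

lemma vertex_coeff_eq_0_if_EG_eq_0:
  assumes "EG G T = zero_op"
  shows "vertex_coeff G T h = 0"
proof -
  have "EG G T (basis h) h = 0"
    using assms by (simp add: zero_op_def)
  then show ?thesis
    by (simp add: EG_def vertex_coeff_def basis_apply split: if_splits)
qed

lemma EG_zero_op: "EG G zero_op = zero_op"
  by (simp add: EG_def zero_op_def fun_eq_iff)

lemma centred_basis_apply:
  assumes "diag_outside G V T" "EG G T = zero_op"
    and "\<not> (h \<in> paths_from G V \<and> k \<in> paths_from G V)"
  shows "T (basis h) k = 0"
proof (cases "h = k")
  case True
  then have "h \<notin> paths_from G V"
    using assms(3) by blast
  then show ?thesis
    using True diag_outside_diag[OF assms(1)] vertex_coeff_eq_0_if_EG_eq_0[OF assms(2)] by simp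
qed (rule diag_outside_off_diag[OF assms(1) _ assms(3)])

lemma centred_comp_eq_zero:
  assumes T: "diag_outside G V T" "EG G T = zero_op"
    and U: "diag_outside G W U" "EG G U = zero_op"
    and disjoint: "V \<inter> W = {}"
  shows "T \<circ> U = zero_op"
proof -
  have bT: "bounded_op T" and bU: "bounded_op U"
    using diag_outside_bounded[OF T(1)] diag_outside_bounded[OF U(1)] .
  have U_range: "U f j = 0" if "j \<in> paths_from G V" for f j
  proof (cases "f \<in> ell2")
    case True
    have "j \<notin> paths_from G W"
      using that disjoint by (auto simp: paths_from_def)
    then have "U (basis h) j = 0" if "f h \<noteq> 0" for h
      using centred_basis_apply[OF U, of h j] by blast
    then show ?thesis
      by (rule bounded_op_apply_eq_0[OF bU True])
  qed (simp add: bounded_op_outside[OF bU])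
  have "T (U f) k = 0" for f k
  proof -
    have "T (basis j) k = 0" if "U f j \<noteq> 0" for j
      using centred_basis_apply[OF T, of j k] U_range that by blast
    then show ?thesis
      by (rule bounded_op_apply_eq_0[OF bT bounded_op_ell2[OF bU]])
  qed
  then show ?thesis
    by (auto simp: zero_op_def fun_eq_iff)
qed

lemma free_amalg_if_centred_products_vanish:
  assumes "E zero_op = zero_op"
    and "\<And>x y. x \<in> A1 \<Longrightarrow> y \<in> A2 \<Longrightarrow> E x = zero_op \<Longrightarrow> E y = zero_op \<Longrightarrow>
           x \<circ> y = zero_op \<and> y \<circ> x = zero_op"
  shows "free_amalg E A1 A2"
  unfolding free_amalg_def
proof (intro allI impI)
  fix xs
  assume "xs \<noteq> []"
    and alternating: "\<forall>i. Suc i < length xs \<longrightarrow> fst (xs ! i) \<noteq> fst (xs ! Suc i)"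
    and centred: "\<forall>p\<in>set xs. snd p \<in> (if fst p then A1 else A2) \<and> E (snd p) = zero_op"
  then consider p where "xs = [p]" | p q rest where "xs = p # q # rest"
    by (metis list.exhaust)
  then show "E (foldr (\<circ>) (map snd xs) id) = zero_op"
  proof cases
    case (1 p)
    then show ?thesis
      using centred by simp
  next
    case (2 p q rest)
    then have "snd p \<circ> snd q = zero_op"
      using alternating[rule_format, of 0] centred assms(2) by (cases "fst p") auto
    then have "foldr (\<circ>) (map snd xs) id = zero_op"
      using 2 by (simp add: zero_op_def fun_eq_iff)
    then show ?thesis
      using assms(1) by simp
  qed
qed

theorem mainTheorem4:
  fixes G :: "('v,'e) pre_digraph"
    and v1 v2 v3 v4 :: 'v
    and a :: "('v,'e) gpath op"
  assumes "wf_digraph G"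
    and "countable (verts G)" and "countable (arcs G)"
    and "v1 \<in> verts G" and "v2 \<in> verts G" and "v3 \<in> verts G" and "v4 \<in> verts G"
    and "distinct [v1, v2, v3, v4]"
    and "a \<in> WG G"
  shows "free_over_DG G (Lop G (GV v1) \<circ> a \<circ> Lop G (GV v2))
                        (Lop G (GV v3) \<circ> a \<circ> Lop G (GV v4))"
proof -
  \<comment> \<open>Only the distinctness of the four vertices matters.\<close>
  have a: "bounded_op a"
    using assms(9) by (simp add: WG_def wstar_gen_def wot_closure_def)
  have disjoint: "{v1, v2} \<inter> {v3, v4} = {}"
    using assms(8) by auto
  show ?thesis
    unfolding free_over_DG_def
  proof (rule free_amalg_if_centred_products_vanish)
    fix x y
    assume x_in: "x \<in> wstar_gen (DG G \<union> {Lop G (GV v1) \<circ> a \<circ> Lop G (GV v2)})"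
      and y_in: "y \<in> wstar_gen (DG G \<union> {Lop G (GV v3) \<circ> a \<circ> Lop G (GV v4)})"
      and x_centred: "EG G x = zero_op" and y_centred: "EG G y = zero_op"
    have x: "diag_outside G {v1, v2} x"
      by (rule diag_outside_wstar_gen_compression[OF assms(1) a x_in])
    have y: "diag_outside G {v3, v4} y"
      by (rule diag_outside_wstar_gen_compression[OF assms(1) a y_in])
    have "x \<circ> y = zero_op"
      by (rule centred_comp_eq_zero[OF x x_centred y y_centred disjoint])
    moreover have "y \<circ> x = zero_op"
      using disjoint by (intro centred_comp_eq_zero[OF y y_centred x x_centred]) blast
    ultimately show "x \<circ> y = zero_op \<and> y \<circ> x = zero_op" ..
  qed (rule EG_zero_op)
qed

end
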